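(* Let $g:\Omega\to[0,1]$ be measurable with $\mathbb E[g]<1$, $g_{\omega,n}=\prod_{j=0}^{n-1}g(\theta^j\omega)$, and $\beta_1(r)=\|g-\mathbb E[g|\mathcal F_r]\|_{L^1(\Omega,\mathcal F,\mathbb P)}$. If $\beta_1(r)+\alpha(r)=O(r^{-M})$ for some $M>0$, then for every $0<x<1$ we have $\mathbb E[g_{\omega,n}]=O(n^{1-x(M+1)})$ as $n\to\infty$.
   Context: $(X_k)_{k\in\mathbb Z}$ is a stationary sequence with values in a measurable space $\Omega_0$ and $(\Omega,\mathcal F,\mathbb P,\theta)$ is its shift system: $\Omega=\Omega_0^{\mathbb Z}$, $\theta$ the left shift, $\mathbb P$ the law of the sequence, $\omega=(\omega_k)$. $\mathcal F_r$ is the $\sigma$-algebra generated by the coordinates $\omega_j$, $|j|\le r$. $\alpha(m)$ is the smallest number such that $|\mathbb P(A\cap B)-\mathbb P(A)\mathbb P(B)|\le\alpha(m)$ for all $k\in\mathbb N$, $A\in\sigma\{X_0,\dots,X_k\}$, $B\in\sigma\{X_{k+m},X_{k+m+1},\dots\}$. *)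

theory Defs
  imports "HOL-Probability.Probability" "HOL-Library.Landau_Symbols"
begin

definition shift :: "(int \<Rightarrow> 'a) \<Rightarrow> (int \<Rightarrow> 'a)" where
  "shift \<omega> = (\<lambda>k. \<omega> (k + 1))"

definition coord_alg :: "'a measure \<Rightarrow> int set \<Rightarrow> (int \<Rightarrow> 'a) measure" where
  "coord_alg M0 J = vimage_algebra (space (Pi\<^sub>M UNIV (\<lambda>_::int. M0)))
      (\<lambda>\<omega>. restrict \<omega> J) (Pi\<^sub>M J (\<lambda>_. M0))"

definition alpha_mix :: "'a measure \<Rightarrow> (int \<Rightarrow> 'a) measure \<Rightarrow> nat \<Rightarrow> real" where
  "alpha_mix M0 P m = Sup {\<bar>measure P (A \<inter> B) - measure P A * measure P B\<bar> | k A B.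
      A \<in> sets (coord_alg M0 {0..int k}) \<and> B \<in> sets (coord_alg M0 {int k + int m..})}"

definition beta1 :: "'a measure \<Rightarrow> (int \<Rightarrow> 'a) measure \<Rightarrow> ((int \<Rightarrow> 'a) \<Rightarrow> real) \<Rightarrow> nat \<Rightarrow> real" where
  "beta1 M0 P g r = (\<integral>\<omega>. \<bar>g \<omega> - real_cond_exp P (coord_alg M0 {- int r..int r}) g \<omega>\<bar> \<partial>P)"

end

theory Submission
  imports Defs "HOL-Real_Asymp.Real_Asymp"
begin

text \<open>
Fix a scale r, let h = E[g | F_r] and, for t < 1 and \<delta> > 0, let L = {h < t + \<delta>}, an event in F_r
of probability q. By Markov's inequality g < t + 2\<delta> on L outside an event of probability
\<beta>_1(r)/\<delta>, and q \<ge> P(g \<le> t) - \<beta>_1(r)/\<delta>. The translates of L centred at 3rw + r depend on the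
coordinates in windows [3rw, 3rw + 2r], consecutive windows being separated by gaps of length r,
so strong mixing shows inductively that N consecutive translates all miss L with probability at
most (1 - q)^N + N \<alpha>(r). Splitting KN windows into K groups of N, the product g_{\<omega>,n} (for
n \<ge> 3r(KN + 1)) has at least K factors below t + 2\<delta>, except on an event of probability at most
KN \<beta>_1(r)/\<delta> + K((1 - q)^N + N \<alpha>(r)). Take \<epsilon> = 1 - E g, t = 1 - \<epsilon>/2, \<delta> = \<epsilon>/6, r \<approx> n^x and
K = N \<approx> n^((1-x)/3): the geometric terms decay faster than any power of n, and
K^2 (\<beta>_1(r) + \<alpha>(r)) \<le> n r^(-M-1) = O(n^(1 - x(M+1))).
\<close>

lemma prod_le_power_card:
  fixes f :: "'a \<Rightarrow> real"
  assumes "finite A" "C \<subseteq> A"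
    and "\<And>x. x \<in> A \<Longrightarrow> 0 \<le> f x \<and> f x \<le> 1" and "\<And>x. x \<in> C \<Longrightarrow> f x \<le> s"
  shows "prod f A \<le> s ^ card C"
proof -
  have "prod f A = prod f (A - C) * prod f C"
    by (rule prod.subset_diff[OF assms(2,1)])
  also have "\<dots> \<le> 1 * prod f C"
    using assms(2,3) by (intro mult_right_mono prod_le_1 prod_nonneg) auto
  also have "\<dots> \<le> (\<Prod>x\<in>C. s)"
    unfolding mult_1 using assms(2-4) by (intro prod_mono) auto
  finally show ?thesis
    by simp
qed

lemma (in prob_space) integral_le_plus_measure:
  assumes "integrable M f" "A \<in> sets M" "\<And>x. x \<in> space M \<Longrightarrow> f x \<le> c + indicator A x"
  shows "(\<integral>x. f x \<partial>M) \<le> c + measure M A"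
proof -
  have "(\<integral>x. f x \<partial>M) \<le> (\<integral>x. c + indicator A x \<partial>M)"
    using assms by (intro integral_mono) (auto simp: emeasure_eq_measure)
  also have "\<dots> = c + measure M A"
    using assms(2) by (subst Bochner_Integration.integral_add) (auto simp: emeasure_eq_measure prob_space)
  finally show ?thesis .
qed

lemma poly_geometric_le_powr:
  fixes \<rho> p :: real
  assumes "0 < \<rho>" "\<rho> < 1"
  obtains C where "0 < C" "\<And>k. 1 \<le> k \<Longrightarrow> (real k + 1) * \<rho> ^ k \<le> C * real k powr (- p)"
proof -
  define c where "c = ln \<rho>"
  have "c < 0"
    unfolding c_def using assms by simp
  then have "(\<lambda>k::nat. (real k + 1) * exp (real k * c) * real k powr p) \<longlonglongrightarrow> 0"
    by real_asymp
  then have "Bseq (\<lambda>k::nat. (real k + 1) * exp (real k * c) * real k powr p)"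
    by (intro convergent_imp_Bseq convergentI)
  then obtain C where C: "0 < C" "\<And>k::nat. norm ((real k + 1) * exp (real k * c) * real k powr p) \<le> C"
    by (auto elim: BseqE)
  have bound: "(real k + 1) * \<rho> ^ k \<le> C * real k powr (- p)" if "1 \<le> k" for k :: nat
  proof -
    have \<rho>_pow: "\<rho> ^ k = exp (real k * c)"
      unfolding c_def exp_of_nat_mult using assms by simp
    have powr_inverse: "real k powr p * real k powr (- p) = 1"
      using that by (simp add: powr_add[symmetric])
    have "(real k + 1) * \<rho> ^ k
        = (real k + 1) * exp (real k * c) * (real k powr p * real k powr (- p))"
      unfolding \<rho>_pow powr_inverse by simp
    also have "\<dots> = ((real k + 1) * exp (real k * c) * real k powr p) * real k powr (- p)"
      by (simp only: mult.assoc)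
    also have "\<dots> \<le> C * real k powr (- p)"
      using C(2)[of k] by (intro mult_right_mono) auto
    finally show ?thesis .
  qed
  show ?thesis
    using C(1) bound by (rule that)
qed

lemma real_nat_floor_bounds:
  fixes z :: real
  assumes "1 \<le> z"
  shows "1 \<le> nat \<lfloor>z\<rfloor>" "z / 2 \<le> real (nat \<lfloor>z\<rfloor>)" "real (nat \<lfloor>z\<rfloor>) \<le> z"
proof -
  have "1 \<le> \<lfloor>z\<rfloor>"
    using assms by (simp add: le_floor_iff)
  moreover have "z < real_of_int \<lfloor>z\<rfloor> + 1"
    by linarith
  moreover have "real (nat \<lfloor>z\<rfloor>) = real_of_int \<lfloor>z\<rfloor>"
    using \<open>1 \<le> \<lfloor>z\<rfloor>\<close> by simp
  ultimately show "1 \<le> nat \<lfloor>z\<rfloor>" "z / 2 \<le> real (nat \<lfloor>z\<rfloor>)" "real (nat \<lfloor>z\<rfloor>) \<le> z"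
    by linarith+
qed

lemma powr_neg_le_of_half_le:
  fixes k z p :: real
  assumes "0 < z" "z / 2 \<le> k" "0 \<le> p"
  shows "k powr (- p) \<le> 2 powr p * z powr (- p)"
proof -
  have "k powr (- p) \<le> (z / 2) powr (- p)"
    using assms by (intro powr_mono2') auto
  also have "\<dots> = z powr (- p) / 2 powr (- p)"
    by (rule powr_divide)
  also have "\<dots> = z powr (- p) / inverse (2 powr p)"
    by (simp only: powr_minus[of 2])
  also have "\<dots> = 2 powr p * z powr (- p)"
    by (simp only: divide_inverse inverse_inverse_eq mult.commute)
  finally show ?thesis .
qed

lemma mul_powr_neg_le:
  fixes k r n x M :: real
  assumes "1 \<le> r" "0 \<le> k" "k * r \<le> n" "n powr x / 2 \<le> r" "0 < n" "0 \<le> M + 1"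
  shows "k * r powr (- M) \<le> 2 powr (M + 1) * n powr (1 - x * (M + 1))"
proof -
  have "r powr (- M) = r powr (- (M + 1)) * r powr 1"
    unfolding powr_add[symmetric] by simp
  then have "k * r powr (- M) = k * r * r powr (- (M + 1))"
    using assms(1) by simp
  also have "\<dots> \<le> n * r powr (- (M + 1))"
    using assms(3) by (intro mult_right_mono) auto
  also have "\<dots> \<le> n * (2 powr (M + 1) * (n powr x) powr (- (M + 1)))"
    using assms by (intro mult_left_mono powr_neg_le_of_half_le) auto
  also have "\<dots> = 2 powr (M + 1) * (n * n powr (- (x * (M + 1))))"
    by (simp add: powr_powr algebra_simps)
  also have "\<dots> = 2 powr (M + 1) * n powr (1 - x * (M + 1))"
    using assms(5) by (simp add: powr_diff powr_minus divide_inverse)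
  finally show ?thesis .
qed

lemma block_sizes_fit:
  fixes x :: real and n r K :: nat
  assumes "real r \<le> real n powr x" "real K \<le> real n powr ((1 - x) / 3)" "1 \<le> K"
    and "6 \<le> real n powr ((1 - x) / 3)"
  shows "3 * r * (K * K + 1) \<le> n"
proof -
  define z where "z = real n powr ((1 - x) / 3)"
  have "1 * 1 \<le> real K * real K"
    using assms(3) by (intro mult_mono) auto
  have "real (3 * r * (K * K + 1)) = 3 * real r * (real K * real K + 1)"
    by (simp add: algebra_simps)
  also have "\<dots> \<le> 3 * real r * (2 * (real K * real K))"
    using \<open>1 * 1 \<le> real K * real K\<close> by (intro mult_left_mono) auto
  also have "\<dots> = 6 * (real r * (real K * real K))"
    by simp
  also have "\<dots> \<le> 6 * (real n powr x * (z * z))"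
    using assms(1,2) unfolding z_def by (intro mult_left_mono mult_mono) auto
  also have "\<dots> \<le> z * (real n powr x * (z * z))"
    using assms(4) unfolding z_def by (intro mult_right_mono) auto
  also have "\<dots> = real n powr ((1 - x) / 3 + (x + ((1 - x) / 3 + (1 - x) / 3)))"
    unfolding z_def by (simp only: powr_add)
  also have "\<dots> = real n powr 1"
    by (rule arg_cong[where f="\<lambda>e. real n powr e"]) (simp add: field_simps)
  finally show ?thesis
    by (simp only: powr_one[OF of_nat_0_le_iff] of_nat_le_iff)
qed

lemma floor_powr_block_sizes:
  fixes x p M :: real and n :: nat
  defines "r \<equiv> nat \<lfloor>real n powr x\<rfloor>" and "K \<equiv> nat \<lfloor>real n powr ((1 - x) / 3)\<rfloor>"
  assumes n: "1 \<le> real n powr x" "6 \<le> real n powr ((1 - x) / 3)"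
    and p: "0 \<le> p" "x * (M + 1) \<le> (1 - x) / 3 * p" and M: "0 \<le> M + 1"
  shows "1 \<le> r" "1 \<le> K" "3 * r * (K * K + 1) \<le> n"
    and "real K powr (- p) \<le> 2 powr p * real n powr (1 - x * (M + 1))"
    and "real K * real K * real r powr (- M) \<le> 2 powr (M + 1) * real n powr (1 - x * (M + 1))"
proof -
  have "n \<noteq> 0"
    using n(2) by (intro notI) simp
  then have n_pos: "1 \<le> real n"
    by simp
  have n_y: "1 \<le> real n powr ((1 - x) / 3)"
    using n(2) by simp
  note r = real_nat_floor_bounds[OF n(1), folded r_def]
  note K = real_nat_floor_bounds[OF n_y, folded K_def]
  show "1 \<le> r" "1 \<le> K"
    using r(1) K(1) .
  show fit: "3 * r * (K * K + 1) \<le> n"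
    using r K n(2) by (intro block_sizes_fit) auto
  have "real K powr (- p) \<le> 2 powr p * (real n powr ((1 - x) / 3)) powr (- p)"
    using K(2) n_pos p(1) by (intro powr_neg_le_of_half_le) auto
  also have "\<dots> \<le> 2 powr p * real n powr (1 - x * (M + 1))"
    using n_pos p(2) by (auto simp: powr_powr intro!: mult_left_mono powr_mono)
  finally show "real K powr (- p) \<le> 2 powr p * real n powr (1 - x * (M + 1))" .
  have "K * K * r \<le> 3 * r * (K * K + 1)"
    by (simp add: algebra_simps)
  then have "real K * real K * real r \<le> real n"
    using fit by (simp only: of_nat_mult[symmetric] of_nat_le_iff)
  then show "real K * real K * real r powr (- M) \<le> 2 powr (M + 1) * real n powr (1 - x * (M + 1))"
    using r n_pos M by (intro mul_powr_neg_le) auto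
qed

lemma funpow_shift: "(shift ^^ j) \<omega> = (\<lambda>k. \<omega> (k + int j))"
  by (induction j arbitrary: \<omega>) (auto simp: shift_def algebra_simps)

lemma sets_coord_alg:
  "sets (coord_alg M0 J) = {(\<lambda>\<omega>. restrict \<omega> J) -` A \<inter> space (Pi\<^sub>M UNIV (\<lambda>_::int. M0)) | A.
     A \<in> sets (Pi\<^sub>M J (\<lambda>_. M0))}"
  unfolding coord_alg_def by (rule sets_vimage_algebra2) (auto simp: space_PiM)

lemma space_coord_alg: "space (coord_alg M0 J) = space (Pi\<^sub>M UNIV (\<lambda>_::int. M0))"
  unfolding coord_alg_def by simp

lemma sets_coord_alg_subset: "sets (coord_alg M0 J) \<subseteq> sets (Pi\<^sub>M UNIV (\<lambda>_::int. M0))"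
  unfolding coord_alg_def by (rule sets_image_in_sets) (auto intro: measurable_restrict_subset)

lemma coord_alg_mono:
  assumes "J \<subseteq> J'"
  shows "sets (coord_alg M0 J) \<subseteq> sets (coord_alg M0 J')"
proof
  fix X assume "X \<in> sets (coord_alg M0 J)"
  then obtain A where A: "A \<in> sets (Pi\<^sub>M J (\<lambda>_. M0))"
    and X: "X = (\<lambda>\<omega>. restrict \<omega> J) -` A \<inter> space (Pi\<^sub>M UNIV (\<lambda>_::int. M0))"
    by (auto simp: sets_coord_alg)
  define A' where "A' = (\<lambda>\<omega>. restrict \<omega> J) -` A \<inter> space (Pi\<^sub>M J' (\<lambda>_. M0))"
  have "A' \<in> sets (Pi\<^sub>M J' (\<lambda>_. M0))"
    unfolding A'_def using measurable_restrict_subset[OF assms] A by (rule measurable_sets)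
  moreover have "X = (\<lambda>\<omega>. restrict \<omega> J') -` A' \<inter> space (Pi\<^sub>M UNIV (\<lambda>_::int. M0))"
    using assms unfolding X A'_def by (auto simp: space_PiM restrict_restrict Int_absorb1 PiE_iff)
  ultimately show "X \<in> sets (coord_alg M0 J')"
    by (auto simp: sets_coord_alg)
qed

lemma shift_pow_vimage_coord_alg:
  assumes "X \<in> sets (coord_alg M0 J)"
  shows "(shift ^^ j) -` X \<inter> space (Pi\<^sub>M UNIV (\<lambda>_::int. M0))
    \<in> sets (coord_alg M0 ((\<lambda>i. i + int j) ` J))"
proof -
  define J' where "J' = (\<lambda>i. i + int j) ` J"
  obtain A where A: "A \<in> sets (Pi\<^sub>M J (\<lambda>_. M0))"
    and X: "X = (\<lambda>\<omega>. restrict \<omega> J) -` A \<inter> space (Pi\<^sub>M UNIV (\<lambda>_::int. M0))"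
    using assms by (auto simp: sets_coord_alg)
  define \<Phi> where "\<Phi> = (\<lambda>x::int \<Rightarrow> 'a. \<lambda>i\<in>J. x (i + int j))"
  have "\<Phi> \<in> Pi\<^sub>M J' (\<lambda>_. M0) \<rightarrow>\<^sub>M Pi\<^sub>M J (\<lambda>_. M0)"
    unfolding \<Phi>_def J'_def by (intro measurable_restrict measurable_component_singleton) auto
  then have A': "\<Phi> -` A \<inter> space (Pi\<^sub>M J' (\<lambda>_. M0)) \<in> sets (Pi\<^sub>M J' (\<lambda>_. M0))"
    using A by (rule measurable_sets)
  have \<Phi>_restrict: "\<Phi> (restrict \<omega> J') = restrict ((shift ^^ j) \<omega>) J" for \<omega>
    unfolding \<Phi>_def J'_def funpow_shift by (auto simp: restrict_def fun_eq_iff)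
  have "(shift ^^ j) \<omega> \<in> space (Pi\<^sub>M UNIV (\<lambda>_::int. M0))"
    if "\<omega> \<in> space (Pi\<^sub>M UNIV (\<lambda>_::int. M0))" for \<omega>
    using that by (auto simp: space_PiM funpow_shift PiE_iff)
  then have "(shift ^^ j) -` X \<inter> space (Pi\<^sub>M UNIV (\<lambda>_::int. M0)) =
     (\<lambda>\<omega>. restrict \<omega> J') -` (\<Phi> -` A \<inter> space (Pi\<^sub>M J' (\<lambda>_. M0))) \<inter> space (Pi\<^sub>M UNIV (\<lambda>_::int. M0))"
    unfolding X by (auto simp: \<Phi>_restrict space_PiM PiE_iff)
  then show ?thesis
    using A' unfolding J'_def[symmetric] sets_coord_alg by blast
qed

locale stationary_sequence = prob_space P
  for P :: "(int \<Rightarrow> 'a) measure" +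
  fixes M0 :: "'a measure" and g :: "(int \<Rightarrow> 'a) \<Rightarrow> real"
  assumes sets_P: "sets P = sets (Pi\<^sub>M UNIV (\<lambda>_::int. M0))"
    and measurable_shift: "shift \<in> P \<rightarrow>\<^sub>M P"
    and distr_shift: "distr P P shift = P"
    and g_measurable: "g \<in> borel_measurable P"
    and g_bounds: "\<And>\<omega>. \<omega> \<in> space P \<Longrightarrow> 0 \<le> g \<omega> \<and> g \<omega> \<le> 1"
begin

lemma space_P: "space P = space (Pi\<^sub>M UNIV (\<lambda>_::int. M0))"
  using sets_P by (rule sets_eq_imp_space_eq)

lemma subalgebra_coord_alg: "subalgebra P (coord_alg M0 J)"
  unfolding subalgebra_def using sets_coord_alg_subset space_coord_alg space_P sets_P by metis

lemma sigma_finite_subalgebra_coord_alg: "sigma_finite_subalgebra P (coord_alg M0 J)"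
proof -
  interpret finite_measure_subalgebra P "coord_alg M0 J"
    by unfold_locales (rule subalgebra_coord_alg)
  show ?thesis
    by (rule sigma_finite_subalgebra_axioms)
qed

lemma coord_alg_sets_P: "X \<in> sets (coord_alg M0 J) \<Longrightarrow> X \<in> sets P"
  using sets_coord_alg_subset sets_P by blast

lemma measurable_shift_pow: "shift ^^ j \<in> P \<rightarrow>\<^sub>M P"
  by (induction j) (auto intro: measurable_compose[OF _ measurable_shift])

lemma distr_shift_pow: "distr P P (shift ^^ j) = P"
proof (induction j)
  case 0
  then show ?case
    by (simp add: distr_id2)
next
  case (Suc j)
  have "distr P P (shift ^^ Suc j) = distr P P (shift \<circ> (shift ^^ j))"
    by simp
  also have "\<dots> = distr (distr P P (shift ^^ j)) P shift"
    using distr_distr[OF measurable_shift measurable_shift_pow] by simp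
  also have "\<dots> = P"
    using Suc distr_shift by simp
  finally show ?case .
qed

lemma measure_shift_pow_vimage: "A \<in> sets P \<Longrightarrow> measure P ((shift ^^ j) -` A \<inter> space P) = measure P A"
  using measure_distr[OF measurable_shift_pow] distr_shift_pow by metis

lemma shift_pow_in_space: "\<omega> \<in> space P \<Longrightarrow> (shift ^^ j) \<omega> \<in> space P"
  by (rule measurable_space[OF measurable_shift_pow])

lemma mixing_le_alpha_mix:
  assumes "A \<in> sets (coord_alg M0 {0..int k})" "B \<in> sets (coord_alg M0 {int k + int m..})"
  shows "\<bar>measure P (A \<inter> B) - measure P A * measure P B\<bar> \<le> alpha_mix M0 P m"
proof -
  have "\<bar>measure P (A \<inter> B) - measure P A * measure P B\<bar> \<le> 1" for A B
  proof -
    have "0 \<le> prob A * prob B" "prob A * prob B \<le> 1"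
      by (simp_all add: mult_le_one)
    then show ?thesis
      using prob_le_1[of "A \<inter> B"] measure_nonneg[of P "A \<inter> B"] by linarith
  qed
  then show ?thesis
    unfolding alpha_mix_def using assms by (intro cSup_upper bdd_aboveI[where M=1]) blast+
qed

lemma alpha_mix_nonneg: "0 \<le> alpha_mix M0 P m"
proof -
  have "space P \<in> sets (coord_alg M0 J)" for J
    using space_coord_alg space_P by (metis sets.top)
  then have "\<bar>measure P (space P \<inter> space P) - measure P (space P) * measure P (space P)\<bar>
      \<le> alpha_mix M0 P m"
    by (intro mixing_le_alpha_mix[where k=0])
  then show ?thesis
    by linarith
qed

lemma beta1_nonneg: "0 \<le> beta1 M0 P g r"
  unfolding beta1_def by (rule integral_nonneg_AE) simp

lemma integrable_g: "integrable P g"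
  by (rule integrable_const_bound[where B=1]) (use g_bounds g_measurable in auto)

lemma integral_g_nonneg: "0 \<le> (\<integral>\<omega>. g \<omega> \<partial>P)"
  using g_bounds by (intro integral_nonneg_AE AE_I2) auto

lemma integral_prod_nonneg: "0 \<le> (\<integral>\<omega>. (\<Prod>j<n. g ((shift ^^ j) \<omega>)) \<partial>P)"
  using g_bounds shift_pow_in_space by (intro integral_nonneg_AE AE_I2 prod_nonneg) auto

lemma measure_g_le_ge:
  assumes "t \<le> 1"
  shows "t - (\<integral>\<omega>. g \<omega> \<partial>P) \<le> measure P {\<omega> \<in> space P. g \<omega> \<le> t}"
proof -
  have "(\<integral>\<omega>. 1 - g \<omega> \<partial>P) \<le> (1 - t) + measure P {\<omega> \<in> space P. g \<omega> \<le> t}"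
  proof (rule integral_le_plus_measure)
    show "1 - g \<omega> \<le> 1 - t + indicator {\<omega> \<in> space P. g \<omega> \<le> t} \<omega>" if "\<omega> \<in> space P" for \<omega>
      using g_bounds[OF that] assms that by (auto split: split_indicator)
  qed (use integrable_g g_measurable in auto)
  moreover have "(\<integral>\<omega>. 1 - g \<omega> \<partial>P) = 1 - (\<integral>\<omega>. g \<omega> \<partial>P)"
    using integrable_g by (simp add: prob_space)
  ultimately show ?thesis
    by linarith
qed

end

locale block_scheme = stationary_sequence +
  fixes r :: nat and t \<delta> :: real
  assumes r_pos: "1 \<le> r" and \<delta>_pos: "0 < \<delta>"
begin

definition cond_g :: "(int \<Rightarrow> 'a) \<Rightarrow> real"
  where "cond_g = real_cond_exp P (coord_alg M0 {- int r..int r}) g"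

definition low :: "(int \<Rightarrow> 'a) set"
  where "low = {\<omega> \<in> space P. cond_g \<omega> < t + \<delta>}"

definition bad :: "(int \<Rightarrow> 'a) set"
  where "bad = {\<omega> \<in> space P. \<delta> \<le> \<bar>g \<omega> - cond_g \<omega>\<bar>}"

definition q :: real
  where "q = measure P low"

definition centre :: "nat \<Rightarrow> nat"
  where "centre w = 3 * r * w + r"

definition low_at :: "nat \<Rightarrow> (int \<Rightarrow> 'a) set"
  where "low_at w = (shift ^^ centre w) -` low \<inter> space P"

definition bad_at :: "nat \<Rightarrow> (int \<Rightarrow> 'a) set"
  where "bad_at w = (shift ^^ centre w) -` bad \<inter> space P"

definition misses :: "nat \<Rightarrow> nat \<Rightarrow> (int \<Rightarrow> 'a) set"
  where "misses j a = {\<omega> \<in> space P. \<forall>i<j. \<omega> \<notin> low_at (a + i)}"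

definition exceptional :: "nat \<Rightarrow> nat \<Rightarrow> (int \<Rightarrow> 'a) set"
  where "exceptional K N = (\<Union>w\<in>{1..K * N}. bad_at w) \<union> (\<Union>b<K. misses N (b * N + 1))"

lemma cond_g_measurable: "cond_g \<in> borel_measurable (coord_alg M0 {- int r..int r})"
  unfolding cond_g_def by (rule borel_measurable_cond_exp)

lemma integrable_cond_g: "integrable P cond_g"
  unfolding cond_g_def
  by (rule sigma_finite_subalgebra.real_cond_exp_int(1)[OF sigma_finite_subalgebra_coord_alg integrable_g])

lemma low_coord: "low \<in> sets (coord_alg M0 {- int r..int r})"
proof -
  have "{\<omega> \<in> space (coord_alg M0 {- int r..int r}). cond_g \<omega> < t + \<delta>} \<in> sets (coord_alg M0 {- int r..int r})"
    using cond_g_measurable by measurable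
  then show ?thesis
    unfolding low_def space_coord_alg space_P .
qed

lemma low_sets: "low \<in> sets P"
  by (rule coord_alg_sets_P[OF low_coord])

lemma bad_sets: "bad \<in> sets P"
  unfolding bad_def
  using measurable_from_subalg[OF subalgebra_coord_alg cond_g_measurable] g_measurable by measurable

lemma measure_bad_le: "measure P bad \<le> beta1 M0 P g r / \<delta>"
proof -
  have "integrable P (\<lambda>\<omega>. \<bar>g \<omega> - cond_g \<omega>\<bar>)"
    using integrable_g integrable_cond_g by auto
  then have "measure P {\<omega> \<in> space P. \<delta> \<le> \<bar>g \<omega> - cond_g \<omega>\<bar>} \<le> (\<integral>\<omega>. \<bar>g \<omega> - cond_g \<omega>\<bar> \<partial>P) / \<delta>"
    by (rule integral_Markov_inequality_measure[where A="space P"]) (use \<delta>_pos in auto)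
  then show ?thesis
    unfolding bad_def beta1_def cond_g_def by simp
qed

lemma measure_g_le_le_q: "measure P {\<omega> \<in> space P. g \<omega> \<le> t} \<le> q + beta1 M0 P g r / \<delta>"
proof -
  have "measure P {\<omega> \<in> space P. g \<omega> \<le> t} \<le> measure P (low \<union> bad)"
    using low_sets bad_sets by (intro finite_measure_mono) (auto simp: low_def bad_def)
  also have "\<dots> \<le> q + measure P bad"
    unfolding q_def using low_sets bad_sets by (rule measure_Un_le)
  finally show ?thesis
    using measure_bad_le by linarith
qed

lemma low_at_coord: "low_at w \<in> sets (coord_alg M0 {int (3 * r * w)..int (3 * r * w + 2 * r)})"
proof -
  have "low_at w \<in> sets (coord_alg M0 ((\<lambda>i. i + int (centre w)) ` {- int r..int r}))"
    unfolding low_at_def space_P by (rule shift_pow_vimage_coord_alg[OF low_coord])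
  then show ?thesis
    by (simp add: centre_def ac_simps)
qed

lemma low_at_sets: "low_at w \<in> sets P"
  by (rule coord_alg_sets_P[OF low_at_coord])

lemma bad_at_sets: "bad_at w \<in> sets P"
  unfolding bad_at_def using measurable_shift_pow bad_sets by (rule measurable_sets)

lemma measure_low_at: "measure P (low_at w) = q"
  unfolding low_at_def q_def using low_sets by (rule measure_shift_pow_vimage)

lemma measure_bad_at: "measure P (bad_at w) = measure P bad"
  unfolding bad_at_def using bad_sets by (rule measure_shift_pow_vimage)

lemma g_centre_less:
  assumes "\<omega> \<in> low_at w" "\<omega> \<notin> bad_at w"
  shows "g ((shift ^^ centre w) \<omega>) < t + 2 * \<delta>"
  using assms unfolding low_at_def bad_at_def low_def bad_def by auto

lemma misses_coord:
  assumes "3 * r * (a + j) \<le> k + r"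
  shows "misses j a \<in> sets (coord_alg M0 {0..int k})"
  using assms
proof (induction j)
  case 0
  have "misses 0 a = space (coord_alg M0 {0..int k})"
    unfolding misses_def space_coord_alg space_P by simp
  then show ?case
    by simp
next
  case (Suc j)
  then have "misses j a \<in> sets (coord_alg M0 {0..int k})"
    by simp
  moreover have "low_at (a + j) \<in> sets (coord_alg M0 {0..int k})"
  proof -
    have "3 * r * (a + j) + 2 * r \<le> k"
      using Suc.prems by (simp add: algebra_simps)
    then have "int (3 * r * (a + j) + 2 * r) \<le> int k"
      by (simp only: of_nat_le_iff)
    then show ?thesis
      by (intro subsetD[OF coord_alg_mono low_at_coord]) auto
  qed
  moreover have "misses (Suc j) a = misses j a \<inter> (space (coord_alg M0 {0..int k}) - low_at (a + j))"
    unfolding misses_def space_coord_alg space_P[symmetric] by (auto simp: less_Suc_eq)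
  ultimately show ?case
    by auto
qed

lemma misses_sets: "misses j a \<in> sets P"
  by (rule coord_alg_sets_P[OF misses_coord[where k="3 * r * (a + j)"]]) simp

lemma measure_misses_le:
  assumes "1 \<le> a"
  shows "measure P (misses j a) \<le> (1 - q) ^ j + j * alpha_mix M0 P r"
proof (induction j)
  case 0
  then show ?case
    by simp
next
  case (Suc j)
  have "r * 1 \<le> r * (3 * (a + j))"
    using assms by (intro mult_le_mono2) simp
  then have "r \<le> 3 * r * (a + j)"
    by (simp add: ac_simps)
  then obtain k where k: "3 * r * (a + j) = k + r"
    by (metis le_iff_add add.commute)
  have A: "misses j a \<in> sets (coord_alg M0 {0..int k})"
    by (rule misses_coord) (simp add: k)
  have "int (3 * r * (a + j)) = int k + int r"
    unfolding k by simp
  then have "low_at (a + j) \<in> sets (coord_alg M0 {int k + int r..})"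
    by (intro subsetD[OF coord_alg_mono low_at_coord]) auto
  then have B: "space P - low_at (a + j) \<in> sets (coord_alg M0 {int k + int r..})"
    using space_coord_alg space_P by (metis sets.compl_sets)
  have "misses (Suc j) a = misses j a \<inter> (space P - low_at (a + j))"
    unfolding misses_def by (auto simp: less_Suc_eq)
  moreover have "measure P (space P - low_at (a + j)) = 1 - q"
    using prob_compl[OF low_at_sets] measure_low_at by simp
  ultimately have "measure P (misses (Suc j) a) \<le> measure P (misses j a) * (1 - q) + alpha_mix M0 P r"
    using mixing_le_alpha_mix[OF A B] by (simp add: abs_le_iff)
  also have "\<dots> \<le> ((1 - q) ^ j + j * alpha_mix M0 P r) * (1 - q) + alpha_mix M0 P r"
    using Suc.IH by (intro add_right_mono mult_right_mono) (auto simp: q_def)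
  also have "\<dots> \<le> (1 - q) ^ Suc j + Suc j * alpha_mix M0 P r"
    using alpha_mix_nonneg[of r] measure_nonneg[of P low]
    by (simp add: algebra_simps mult_left_le q_def)
  finally show ?case .
qed

lemma exceptional_sets: "exceptional K N \<in> sets P"
  unfolding exceptional_def using bad_at_sets misses_sets by auto

lemma measure_exceptional_le:
  "measure P (exceptional K N)
     \<le> real (K * N) * (beta1 M0 P g r / \<delta>) + real K * ((1 - q) ^ N + real N * alpha_mix M0 P r)"
proof -
  have "measure P (exceptional K N)
      \<le> measure P (\<Union>w\<in>{1..K * N}. bad_at w) + measure P (\<Union>b<K. misses N (b * N + 1))"
    unfolding exceptional_def by (rule measure_Un_le) (use bad_at_sets misses_sets in auto)
  also have "\<dots> \<le> (\<Sum>w\<in>{1..K * N}. measure P (bad_at w)) + (\<Sum>b<K. measure P (misses N (b * N + 1)))"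
    by (intro add_mono finite_measure_subadditive_finite) (use bad_at_sets misses_sets in auto)
  also have "\<dots> \<le> (\<Sum>w\<in>{1..K * N}. beta1 M0 P g r / \<delta>) + (\<Sum>b<K. (1 - q) ^ N + real N * alpha_mix M0 P r)"
    by (intro add_mono sum_mono) (auto simp: measure_bad_at measure_bad_le measure_misses_le)
  finally show ?thesis
    by simp
qed

lemma low_blocks_off_exceptional:
  assumes "\<omega> \<notin> exceptional K N" "\<omega> \<in> space P"
  obtains w where "strict_mono_on {..<K} w"
    and "\<And>b. b < K \<Longrightarrow> w b \<in> {1..K * N} \<and> \<omega> \<in> low_at (w b) \<and> \<omega> \<notin> bad_at (w b)"
proof -
  have "\<forall>b\<in>{..<K}. \<exists>i. i < N \<and> \<omega> \<in> low_at (b * N + 1 + i)"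
    using assms by (auto simp: exceptional_def misses_def)
  then obtain i where i: "\<And>b. b < K \<Longrightarrow> i b < N \<and> \<omega> \<in> low_at (b * N + 1 + i b)"
    by (metis bchoice lessThan_iff)
  define w where "w b = b * N + 1 + i b" for b
  show ?thesis
  proof (rule that)
    show "strict_mono_on {..<K} w"
    proof (rule strict_mono_onI)
      fix b b' assume "b \<in> {..<K}" "b' \<in> {..<K}" "b < b'"
      then have "Suc b * N \<le> b' * N"
        by (intro mult_right_mono) auto
      then show "w b < w b'"
        using i[of b] \<open>b' \<in> {..<K}\<close> \<open>b < b'\<close> unfolding w_def by simp
    qed
    show "w b \<in> {1..K * N} \<and> \<omega> \<in> low_at (w b) \<and> \<omega> \<notin> bad_at (w b)" if "b < K" for b
    proof -
      have "Suc b * N \<le> K * N"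
        using that by (intro mult_right_mono) auto
      then have "w b \<in> {1..K * N}"
        using i[OF that] unfolding w_def by simp
      then show ?thesis
        using i[OF that] assms(1) unfolding w_def exceptional_def by auto
    qed
  qed
qed

lemma prod_le_power_off_exceptional:
  assumes n: "3 * r * (K * N + 1) \<le> n" and \<omega>: "\<omega> \<in> space P" "\<omega> \<notin> exceptional K N"
  shows "(\<Prod>j<n. g ((shift ^^ j) \<omega>)) \<le> (t + 2 * \<delta>) ^ K"
proof -
  obtain w where w_mono: "strict_mono_on {..<K} w"
    and w: "\<And>b. b < K \<Longrightarrow> w b \<in> {1..K * N} \<and> \<omega> \<in> low_at (w b) \<and> \<omega> \<notin> bad_at (w b)"
    using low_blocks_off_exceptional[OF \<omega>(2,1)] by blast
  define C where "C = (centre \<circ> w) ` {..<K}"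
  have "inj_on (centre \<circ> w) {..<K}"
    using w_mono r_pos by (intro strict_mono_on_imp_inj_on) (auto simp: strict_mono_on_def centre_def)
  then have card_C: "card C = K"
    unfolding C_def by (subst card_image) auto
  have "C \<subseteq> {..<n}"
  proof
    fix c assume "c \<in> C"
    then obtain b where b: "b < K" "c = 3 * r * w b + r"
      unfolding C_def centre_def by auto
    have "3 * r * w b \<le> 3 * r * (K * N)"
      using w[OF b(1)] by simp
    moreover have "3 * r * (K * N + 1) = 3 * r * (K * N) + 3 * r"
      by (simp add: algebra_simps)
    ultimately have "c < n"
      using b(2) n r_pos by linarith
    then show "c \<in> {..<n}"
      by simp
  qed
  moreover have "g ((shift ^^ c) \<omega>) \<le> t + 2 * \<delta>" if "c \<in> C" for c
    using that w g_centre_less unfolding C_def by fastforce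
  ultimately have "(\<Prod>j<n. g ((shift ^^ j) \<omega>)) \<le> (t + 2 * \<delta>) ^ card C"
    using g_bounds shift_pow_in_space[OF \<omega>(1)] by (intro prod_le_power_card) auto
  then show ?thesis
    unfolding card_C .
qed

lemma integral_prod_le:
  assumes "3 * r * (K * N + 1) \<le> n" "0 \<le> t + 2 * \<delta>"
  shows "(\<integral>\<omega>. (\<Prod>j<n. g ((shift ^^ j) \<omega>)) \<partial>P) \<le> (t + 2 * \<delta>) ^ K + measure P (exceptional K N)"
proof (rule integral_le_plus_measure)
  have prod_bounds: "0 \<le> (\<Prod>j<n. g ((shift ^^ j) \<omega>)) \<and> (\<Prod>j<n. g ((shift ^^ j) \<omega>)) \<le> 1"
    if "\<omega> \<in> space P" for \<omega>
    using g_bounds shift_pow_in_space[OF that] by (auto intro: prod_le_1 prod_nonneg)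
  have "(\<lambda>\<omega>. \<Prod>j<n. g ((shift ^^ j) \<omega>)) \<in> borel_measurable P"
    by (intro borel_measurable_prod measurable_compose[OF measurable_shift_pow g_measurable])
  then show "integrable P (\<lambda>\<omega>. \<Prod>j<n. g ((shift ^^ j) \<omega>))"
    using prod_bounds by (intro integrable_const_bound[where B=1] AE_I2) auto
  show "(\<Prod>j<n. g ((shift ^^ j) \<omega>)) \<le> (t + 2 * \<delta>) ^ K + indicator (exceptional K N) \<omega>"
    if "\<omega> \<in> space P" for \<omega>
  proof (cases "\<omega> \<in> exceptional K N")
    case True
    then show ?thesis
      using prod_bounds[OF that] zero_le_power[OF assms(2), of K] by simp
  next
    case False
    then show ?thesis
      using prod_le_power_off_exceptional[OF assms(1) that] by simp
  qed
qed (rule exceptional_sets)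

end

context stationary_sequence
begin

lemma integral_prod_le_block_bound:
  assumes \<epsilon>: "\<epsilon> = 1 - (\<integral>\<omega>. g \<omega> \<partial>P)" "0 < \<epsilon>" and r: "1 \<le> r"
    and beta_small: "beta1 M0 P g r \<le> \<epsilon>\<^sup>2 / 24" and rate: "beta1 M0 P g r + alpha_mix M0 P r \<le> B"
    and n: "3 * r * (K * K + 1) \<le> n"
  shows "(\<integral>\<omega>. (\<Prod>j<n. g ((shift ^^ j) \<omega>)) \<partial>P)
    \<le> (real K + 1) * (1 - \<epsilon> / 6) ^ K + (6 / \<epsilon> + 1) * (real K * real K * B)"
proof -
  interpret block_scheme P M0 g r "1 - \<epsilon> / 2" "\<epsilon> / 6"
    using \<epsilon>(2) r by unfold_locales auto
  have "\<epsilon> \<le> 1"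
    using \<epsilon>(1) integral_g_nonneg by simp
  have "1 - \<epsilon> / 2 - (\<integral>\<omega>. g \<omega> \<partial>P) \<le> measure P {\<omega> \<in> space P. g \<omega> \<le> 1 - \<epsilon> / 2}"
    by (rule measure_g_le_ge) (use \<epsilon>(2) in simp)
  moreover have "beta1 M0 P g r / (\<epsilon> / 6) \<le> \<epsilon> / 4"
    using beta_small \<epsilon>(2) by (simp add: field_simps power2_eq_square)
  ultimately have "\<epsilon> / 4 \<le> q"
    using measure_g_le_le_q \<epsilon>(1) by linarith
  then have "(1 - q) ^ K \<le> (1 - \<epsilon> / 6) ^ K"
    using prob_le_1[of low] \<epsilon>(2) unfolding q_def by (intro power_mono) linarith+
  have "6 / \<epsilon> * beta1 M0 P g r + alpha_mix M0 P r \<le> (6 / \<epsilon> + 1) * (beta1 M0 P g r + alpha_mix M0 P r)"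
    using beta1_nonneg[of r] alpha_mix_nonneg[of r] \<epsilon>(2) by (simp add: algebra_simps)
  also have "\<dots> \<le> (6 / \<epsilon> + 1) * B"
    using rate \<epsilon>(2) by (intro mult_left_mono) auto
  finally have mixing_term: "6 / \<epsilon> * beta1 M0 P g r + alpha_mix M0 P r \<le> (6 / \<epsilon> + 1) * B" .
  have "(\<integral>\<omega>. (\<Prod>j<n. g ((shift ^^ j) \<omega>)) \<partial>P) \<le> (1 - \<epsilon> / 6) ^ K + measure P (exceptional K K)"
    using integral_prod_le[OF n] \<open>\<epsilon> \<le> 1\<close> by simp
  also have "\<dots> \<le> (1 - \<epsilon> / 6) ^ K + real (K * K) * (beta1 M0 P g r / (\<epsilon> / 6))
      + real K * ((1 - q) ^ K + real K * alpha_mix M0 P r)"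
    using measure_exceptional_le[of K K] by simp
  also have "\<dots> \<le> (1 - \<epsilon> / 6) ^ K + real (K * K) * (beta1 M0 P g r / (\<epsilon> / 6))
      + real K * ((1 - \<epsilon> / 6) ^ K + real K * alpha_mix M0 P r)"
    using \<open>(1 - q) ^ K \<le> (1 - \<epsilon> / 6) ^ K\<close> by (intro add_left_mono mult_left_mono) auto
  also have "\<dots> = (real K + 1) * (1 - \<epsilon> / 6) ^ K
      + real K * real K * (6 / \<epsilon> * beta1 M0 P g r + alpha_mix M0 P r)"
    by (simp add: algebra_simps)
  also have "\<dots> \<le> (real K + 1) * (1 - \<epsilon> / 6) ^ K + real K * real K * ((6 / \<epsilon> + 1) * B)"
    using mixing_term by (intro add_left_mono mult_left_mono) auto
  finally show ?thesis
    by (simp add: ac_simps)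
qed

lemma mixing_rate_bounds:
  assumes rate: "(\<lambda>r. beta1 M0 P g r + alpha_mix M0 P r) \<in> O(\<lambda>r. real r powr (- M))"
    and "0 < M" "0 < c"
  obtains C R where "0 \<le> C"
    and "\<And>r. R \<le> r \<Longrightarrow> beta1 M0 P g r + alpha_mix M0 P r \<le> C * real r powr (- M) \<and> beta1 M0 P g r \<le> c"
proof -
  obtain C where C: "0 < C"
    "eventually (\<lambda>r. norm (beta1 M0 P g r + alpha_mix M0 P r) \<le> C * norm (real r powr (- M))) at_top"
    using landau_o.bigE[OF rate] by blast
  have "(\<lambda>r::nat. C * real r powr (- M)) \<longlonglongrightarrow> 0"
    using \<open>0 < M\<close> by real_asymp
  then have "eventually (\<lambda>r. C * real r powr (- M) < c) at_top"
    using \<open>0 < c\<close> by (intro order_tendstoD(2))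
  from eventually_conj[OF C(2) this] obtain R where R: "\<And>r. R \<le> r \<Longrightarrow>
      norm (beta1 M0 P g r + alpha_mix M0 P r) \<le> C * norm (real r powr (- M)) \<and> C * real r powr (- M) < c"
    unfolding eventually_at_top_linorder by blast
  have "beta1 M0 P g r + alpha_mix M0 P r \<le> C * real r powr (- M) \<and> beta1 M0 P g r \<le> c" if "R \<le> r" for r
    using R[OF that] beta1_nonneg[of r] alpha_mix_nonneg[of r] by auto
  then show ?thesis
    using C(1) by (intro that[of C R]) auto
qed

lemma integral_prod_bigo:
  assumes Eg: "(\<integral>\<omega>. g \<omega> \<partial>P) < 1" and M: "0 < M"
    and rate: "(\<lambda>r. beta1 M0 P g r + alpha_mix M0 P r) \<in> O(\<lambda>r. real r powr (- M))"
    and x: "0 < x" "x < 1"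
  shows "(\<lambda>n. \<integral>\<omega>. (\<Prod>j<n. g ((shift ^^ j) \<omega>)) \<partial>P) \<in> O(\<lambda>n. real n powr (1 - x * (M + 1)))"
proof -
  define \<epsilon> where "\<epsilon> = 1 - (\<integral>\<omega>. g \<omega> \<partial>P)"
  define p where "p = 3 * x * (M + 1) / (1 - x)"
  have \<epsilon>: "0 < \<epsilon>" "\<epsilon> \<le> 1"
    using Eg integral_g_nonneg unfolding \<epsilon>_def by auto
  have p: "0 \<le> p" "x * (M + 1) \<le> (1 - x) / 3 * p"
    using x M unfolding p_def by auto
  obtain Cg where Cg: "0 < Cg" "\<And>k. 1 \<le> k \<Longrightarrow> (real k + 1) * (1 - \<epsilon> / 6) ^ k \<le> Cg * real k powr (- p)"
    using poly_geometric_le_powr[of "1 - \<epsilon> / 6"] \<epsilon> by auto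
  obtain C0 R where C0: "0 \<le> C0" and R: "\<And>r. R \<le> r \<Longrightarrow>
      beta1 M0 P g r + alpha_mix M0 P r \<le> C0 * real r powr (- M) \<and> beta1 M0 P g r \<le> \<epsilon>\<^sup>2 / 24"
    using mixing_rate_bounds[OF rate M, of "\<epsilon>\<^sup>2 / 24"] \<epsilon> by auto
  define C where "C = Cg * 2 powr p + (6 / \<epsilon> + 1) * C0 * 2 powr (M + 1)"
  have "filterlim (\<lambda>n::nat. real n powr x) at_top at_top"
    and "filterlim (\<lambda>n::nat. real n powr ((1 - x) / 3)) at_top at_top"
    using x by real_asymp+
  then have "eventually (\<lambda>n. max (real R) 1 \<le> real n powr x \<and> 6 \<le> real n powr ((1 - x) / 3)) at_top"
    unfolding filterlim_at_top by (intro eventually_conj) blast+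
  then have "eventually (\<lambda>n. norm (\<integral>\<omega>. (\<Prod>j<n. g ((shift ^^ j) \<omega>)) \<partial>P)
      \<le> C * norm (real n powr (1 - x * (M + 1)))) at_top"
  proof (rule eventually_mono, elim conjE)
    fix n :: nat
    assume n_x: "max (real R) 1 \<le> real n powr x" and n_y: "6 \<le> real n powr ((1 - x) / 3)"
    define r where "r = nat \<lfloor>real n powr x\<rfloor>"
    define K where "K = nat \<lfloor>real n powr ((1 - x) / 3)\<rfloor>"
    have sizes: "1 \<le> r" "1 \<le> K" "3 * r * (K * K + 1) \<le> n"
      "real K powr (- p) \<le> 2 powr p * real n powr (1 - x * (M + 1))"
      "real K * real K * real r powr (- M) \<le> 2 powr (M + 1) * real n powr (1 - x * (M + 1))"
      using floor_powr_block_sizes[of n x p M, folded r_def K_def] n_x n_y p M by auto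
    have "R \<le> r"
      unfolding r_def by (rule le_nat_floor) (use n_x in simp)
    have "(\<integral>\<omega>. (\<Prod>j<n. g ((shift ^^ j) \<omega>)) \<partial>P)
        \<le> (real K + 1) * (1 - \<epsilon> / 6) ^ K + (6 / \<epsilon> + 1) * (real K * real K * (C0 * real r powr (- M)))"
      using \<epsilon>(1) R[OF \<open>R \<le> r\<close>] sizes(1,3) unfolding \<epsilon>_def
      by (intro integral_prod_le_block_bound) auto
    also have "\<dots> \<le> Cg * (2 powr p * real n powr (1 - x * (M + 1)))
        + (6 / \<epsilon> + 1) * (C0 * (2 powr (M + 1) * real n powr (1 - x * (M + 1))))"
    proof (rule add_mono)
      show "(real K + 1) * (1 - \<epsilon> / 6) ^ K \<le> Cg * (2 powr p * real n powr (1 - x * (M + 1)))"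
        using Cg(1) by (intro order.trans[OF Cg(2)[OF sizes(2)] mult_left_mono[OF sizes(4)]]) simp
      show "(6 / \<epsilon> + 1) * (real K * real K * (C0 * real r powr (- M)))
          \<le> (6 / \<epsilon> + 1) * (C0 * (2 powr (M + 1) * real n powr (1 - x * (M + 1))))"
        using mult_left_mono[OF sizes(5) C0] \<epsilon> by (intro mult_left_mono) (simp_all add: ac_simps)
    qed
    also have "\<dots> = C * real n powr (1 - x * (M + 1))"
      unfolding C_def by (simp add: algebra_simps)
    finally show "norm (\<integral>\<omega>. (\<Prod>j<n. g ((shift ^^ j) \<omega>)) \<partial>P) \<le> C * norm (real n powr (1 - x * (M + 1)))"
      using integral_prod_nonneg by simp
  qed
  then show ?thesis
    by (rule bigoI)
qed

end

theorem lemma3p3: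
  fixes M0 :: "'a measure" and P :: "(int \<Rightarrow> 'a) measure"
    and g :: "(int \<Rightarrow> 'a) \<Rightarrow> real" and M :: real
  assumes "prob_space P"
    and "sets P = sets (Pi\<^sub>M UNIV (\<lambda>_::int. M0))"
    and "shift \<in> P \<rightarrow>\<^sub>M P" and "distr P P shift = P"
    and "g \<in> borel_measurable P"
    and "\<And>\<omega>. \<omega> \<in> space P \<Longrightarrow> 0 \<le> g \<omega> \<and> g \<omega> \<le> 1"
    and "(\<integral>\<omega>. g \<omega> \<partial>P) < 1"
    and "M > 0"
    and "(\<lambda>r. beta1 M0 P g r + alpha_mix M0 P r) \<in> O(\<lambda>r. real r powr (- M))"
  shows "\<forall>x. 0 < x \<and> x < 1 \<longrightarrow>
     (\<lambda>n. \<integral>\<omega>. (\<Prod>j<n. g ((shift ^^ j) \<omega>)) \<partial>P) \<in> O(\<lambda>n. real n powr (1 - x * (M + 1)))"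
proof (intro allI impI)
  fix x :: real
  assume "0 < x \<and> x < 1"
  interpret stationary_sequence P M0 g
    using assms(1-6) by (intro stationary_sequence.intro stationary_sequence_axioms.intro) auto
  show "(\<lambda>n. \<integral>\<omega>. (\<Prod>j<n. g ((shift ^^ j) \<omega>)) \<partial>P) \<in> O(\<lambda>n. real n powr (1 - x * (M + 1)))"
    using integral_prod_bigo[OF assms(7-9)] \<open>0 < x \<and> x < 1\<close> by blast
qed

end
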